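(* Let $\epsilon_1>0$ and $\epsilon_2>0$. For all $r \in \mathbb{R}^3\setminus\{0\}$ and all $f_*\in\mathbb{R}^3$, $$\psi\Big(r, \frac{f_*}{\|r\|^4}\Big) > \|c_1(r,f_* )\|^2 = \big(2 - \operatorname{sgn}(r^{\mathrm T} f_* )^2\big)\,\|c_2(r,f_* )\|^2,$$ where $\psi$, $c_1$, $c_2$ are defined in the context below.
   Context: Notation: $\|\cdot\|$ is the Euclidean norm. For $a=(a_1,a_2,a_3)^{\mathrm T}\in\mathbb{R}^3$, $[a]_\times$ is the skew-symmetric matrix with rows $(0,-a_3,a_2)$, $(a_3,0,-a_1)$, $(-a_2,a_1,0)$, so $[a]_\times b = a\times b$. $\operatorname{sgn}:\mathbb{R}\to\{-1,0,1\}$ is the sign function with $\operatorname{sgn}(0)=0$. Auxiliary scalar: for $r,f_*\in\mathbb{R}^3$, $\Phi_1(r,f_* ) \triangleq \sqrt{\|[r]_\times f_*\|^2 + \|r\|^2\|f_*\|^2}$ and $\Phi_2(r,f_* ) \triangleq \big(2-\operatorname{sgn}(r^{\mathrm T} f_* )^2\big)\Phi_1(r,f_* )$. Function $\psi:\mathbb{R}^3\times\mathbb{R}^3\to\mathbb{R}$ (with the fixed constants $\epsilon_1,\epsilon_2>0$): $$\psi(r,\zeta) \triangleq -\frac{\|r\|^3\, r^{\mathrm T}\zeta}{4}\tanh\Big(\frac{\|r\|^3\, r^{\mathrm T}\zeta}{\epsilon_1}\Big) + \sqrt{\|r\|^6\,\Phi_1(r,\zeta)^2 + \epsilon_2}.$$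 Matrix $R(r,f_* )\in\mathbb{R}^{3\times3}$ (for $r\neq0$): if $[r]_\times f_*\neq0$, its three rows are (the transposes of) $\frac{r}{\|r\|}$, $\frac{(r^{\mathrm T} r) f_* - (r^{\mathrm T} f_* ) r}{\|r\|\,\|[r]_\times f_*\|}$, $\frac{[r]_\times f_*}{\|[r]_\times f_*\|}$; if $[r]_\times f_*=0$, its first row is $r^{\mathrm T}/\|r\|$ and its other two rows are zero. Scalars (evaluated at $(r,f_* )$, $r\ne 0$): $a_x \triangleq -\frac{\operatorname{sgn}(r^{\mathrm T} f_* )}{2}\big(\frac{|r^{\mathrm T} f_*|+\Phi_1}{\|r\|}\big)^{1/2}$, $a_y \triangleq \frac{1}{\sqrt2}\big(\frac{-|r^{\mathrm T} f_*|+\Phi_2}{\|r\|}\big)^{1/2}$, $b_x \triangleq \frac12\big(\frac{|r^{\mathrm T} f_*|+\Phi_2}{\|r\|}\big)^{1/2}$, $b_y \triangleq -\frac{\operatorname{sgn}(r^{\mathrm T} f_* )}{\sqrt2}\big(\frac{-|r^{\mathrm T} f_*|+\Phi_1}{\|r\|}\big)^{1/2}$. With $a(r,f_* )\triangleq(a_x,a_y,0)^{\mathrm T}$ and $b(r,f_* )\triangleq(b_x,b_y,0)^{\mathrm T}$, define $c_1(r,f_* )\triangleq R(r,f_* )^{\mathrm T} a(r,f_* )$ and $c_2(r,f_* )\triangleq R(r,f_* )^{\mathrm T} b(r,f_* )$. *)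

theory Defs
  imports "HOL-Analysis.Analysis"
begin

definition skew :: "real^3 \<Rightarrow> real^3^3" where
  "skew a = vector [vector [0, - a$3, a$2], vector [a$3, 0, - a$1], vector [- a$2, a$1, 0]]"

definition Phi1 :: "real^3 \<Rightarrow> real^3 \<Rightarrow> real" where
  "Phi1 r f = sqrt ((norm (skew r *v f))^2 + (norm r)^2 * (norm f)^2)"

definition Phi2 :: "real^3 \<Rightarrow> real^3 \<Rightarrow> real" where
  "Phi2 r f = (2 - (sgn (r \<bullet> f))^2) * Phi1 r f"

definition psi :: "real \<Rightarrow> real \<Rightarrow> real^3 \<Rightarrow> real^3 \<Rightarrow> real" where
  "psi eps1 eps2 r \<zeta> =
     - ((norm r)^3 * (r \<bullet> \<zeta>) / 4) * tanh ((norm r)^3 * (r \<bullet> \<zeta>) / eps1)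
     + sqrt ((norm r)^6 * (Phi1 r \<zeta>)^2 + eps2)"

definition Rmat :: "real^3 \<Rightarrow> real^3 \<Rightarrow> real^3^3" where
  "Rmat r f =
    (if skew r *v f \<noteq> 0 then
       vector [ (1 / norm r) *\<^sub>R r,
                (1 / (norm r * norm (skew r *v f))) *\<^sub>R ((r \<bullet> r) *\<^sub>R f - (r \<bullet> f) *\<^sub>R r),
                (1 / norm (skew r *v f)) *\<^sub>R (skew r *v f) ]
     else vector [ (1 / norm r) *\<^sub>R r, 0, 0 ])"

definition ax :: "real^3 \<Rightarrow> real^3 \<Rightarrow> real" where
  "ax r f = - (sgn (r \<bullet> f) / 2) * sqrt ((\<bar>r \<bullet> f\<bar> + Phi1 r f) / norm r)"

definition ay :: "real^3 \<Rightarrow> real^3 \<Rightarrow> real" where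
  "ay r f = (1 / sqrt 2) * sqrt ((- \<bar>r \<bullet> f\<bar> + Phi2 r f) / norm r)"

definition bx :: "real^3 \<Rightarrow> real^3 \<Rightarrow> real" where
  "bx r f = (1 / 2) * sqrt ((\<bar>r \<bullet> f\<bar> + Phi2 r f) / norm r)"

definition by' :: "real^3 \<Rightarrow> real^3 \<Rightarrow> real" where
  "by' r f = - (sgn (r \<bullet> f) / sqrt 2) * sqrt ((- \<bar>r \<bullet> f\<bar> + Phi1 r f) / norm r)"

definition avec :: "real^3 \<Rightarrow> real^3 \<Rightarrow> real^3" where
  "avec r f = vector [ax r f, ay r f, 0]"

definition bvec :: "real^3 \<Rightarrow> real^3 \<Rightarrow> real^3" where
  "bvec r f = vector [bx r f, by' r f, 0]"

definition c1 :: "real^3 \<Rightarrow> real^3 \<Rightarrow> real^3" where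
  "c1 r f = transpose (Rmat r f) *v avec r f"

definition c2 :: "real^3 \<Rightarrow> real^3 \<Rightarrow> real^3" where
  "c2 r f = transpose (Rmat r f) *v bvec r f"

end

theory Submission
  imports Defs
begin

(* Write s = r \<bullet> f, P = Phi1 r f and n = norm r. The first two rows of Rmat r f are
   orthonormal (by Lagrange's formula the second is -r \<times> (r \<times> f) / (n * norm (r \<times> f))),
   and when r \<times> f = 0 the second coordinates of a and b vanish; so norm (c1 r f)^2 = ax^2 + ay^2
   and norm (c2 r f)^2 = bx^2 + by^2. These are P / n and P / (2 n) if s = 0, and both equal
   (3 P - |s|) / (4 n) otherwise; either way norm (c1 r f)^2 \<le> (P - |s| / 4) / n.
   As Phi1 r is positively homogeneous, psi at f / n^4 exceeds exactly this bound: the tanh term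
   is at least -|s| / (4 n) because |tanh| \<le> 1, and the square
   root exceeds P / n because eps2 > 0. *)

unbundle cross3_syntax

lemma skew_mult_vec_eq_cross3: "skew a *v b = a \<times> b"
  by (simp add: skew_def cross3_def matrix_vector_mult_def sum_3 vec_eq_iff forall_3 algebra_simps)

lemma Phi1_eq_sqrt_cross3: "Phi1 r f = sqrt (2 * (norm (r \<times> f))\<^sup>2 + (r \<bullet> f)\<^sup>2)"
  by (simp add: Phi1_def skew_mult_vec_eq_cross3 norm_cross)

lemma abs_inner_le_Phi1: "\<bar>r \<bullet> f\<bar> \<le> Phi1 r f"
  unfolding Phi1_eq_sqrt_cross3 by (rule real_le_rsqrt) simp

lemma Phi1_nonneg: "0 \<le> Phi1 r f"
  by (simp add: Phi1_def)

lemma Phi1_eq_abs_inner: "r \<times> f = 0 \<Longrightarrow> Phi1 r f = \<bar>r \<bullet> f\<bar>"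
  by (simp add: Phi1_eq_sqrt_cross3)

lemma Phi1_scaleR_right: "Phi1 r (c *\<^sub>R f) = \<bar>c\<bar> * Phi1 r f"
proof -
  have "2 * (norm (r \<times> (c *\<^sub>R f)))\<^sup>2 + (r \<bullet> c *\<^sub>R f)\<^sup>2
      = c\<^sup>2 * (2 * (norm (r \<times> f))\<^sup>2 + (r \<bullet> f)\<^sup>2)"
    by (simp add: cross_mult_right algebra_simps)
  then show ?thesis
    by (simp add: Phi1_eq_sqrt_cross3 real_sqrt_mult)
qed

lemma Phi2_eq: "Phi2 r f = (if r \<bullet> f = 0 then 2 * Phi1 r f else Phi1 r f)"
  by (simp add: Phi2_def sgn_real_def)

lemma abs_inner_le_Phi2: "\<bar>r \<bullet> f\<bar> \<le> Phi2 r f"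
  using abs_inner_le_Phi1[of r f] by (simp add: Phi2_eq)

lemma transpose_vector_mult_vector:
  fixes u v w :: "real^'n"
  shows "transpose (vector [u, v, w] :: real^'n^3) *v vector [a, b, c]
    = a *\<^sub>R u + b *\<^sub>R v + c *\<^sub>R w"
  by (simp add: vec_eq_iff matrix_vector_mult_def transpose_def sum_3 mult.commute)

lemma norm_cross_cross_self: "norm (r \<times> (r \<times> f)) = norm r * norm (r \<times> f)"
proof -
  have "(norm (r \<times> (r \<times> f)))\<^sup>2 = (norm r * norm (r \<times> f))\<^sup>2"
    by (simp add: norm_cross dot_cross_self power_mult_distrib)
  then show ?thesis
    by simp
qed

lemma norm_transpose_Rmat_mult:
  assumes "r \<noteq> 0" and "r \<times> f = 0 \<Longrightarrow> b = 0"
  shows "(norm (transpose (Rmat r f) *v vector [a, b, 0]))\<^sup>2 = a\<^sup>2 + b\<^sup>2"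
proof (cases "r \<times> f = 0")
  case True
  then have "transpose (Rmat r f) *v vector [a, b, 0] = (a / norm r) *\<^sub>R r"
    using assms(2) by (simp add: Rmat_def skew_mult_vec_eq_cross3 transpose_vector_mult_vector
        del: transpose_matrix_vector)
  then show ?thesis
    using assms True by (simp add: power_divide)
next
  case False
  define u where "u = (1 / norm r) *\<^sub>R r"
  define v
    where "v = (1 / (norm r * norm (r \<times> f))) *\<^sub>R ((r \<bullet> r) *\<^sub>R f - (r \<bullet> f) *\<^sub>R r)"
  have v_cross: "v = (1 / (norm r * norm (r \<times> f))) *\<^sub>R - (r \<times> (r \<times> f))"
    by (simp add: v_def Lagrange)
  have "transpose (Rmat r f) *v vector [a, b, 0] = a *\<^sub>R u + b *\<^sub>R v"
    using False by (simp add: Rmat_def skew_mult_vec_eq_cross3 transpose_vector_mult_vector u_def v_def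
        del: transpose_matrix_vector)
  moreover have "orthogonal (a *\<^sub>R u) (b *\<^sub>R v)"
    by (simp add: orthogonal_def u_def v_cross dot_cross_self)
  moreover have "norm u = 1" "norm v = 1"
    using assms(1) False by (simp_all add: u_def v_cross norm_cross_cross_self)
  ultimately show ?thesis
    by (simp add: norm_add_Pythagorean power_mult_distrib)
qed

lemma ax_squared:
  "(ax r f)\<^sup>2 = (if r \<bullet> f = 0 then 0 else (\<bar>r \<bullet> f\<bar> + Phi1 r f) / (4 * norm r))"
proof -
  have "0 \<le> (\<bar>r \<bullet> f\<bar> + Phi1 r f) / norm r"
    using abs_inner_le_Phi1[of r f] by simp
  then show ?thesis
    by (simp add: ax_def power_mult_distrib power_divide sgn_real_def)
qed

lemma ay_squared: "(ay r f)\<^sup>2 = (Phi2 r f - \<bar>r \<bullet> f\<bar>) / (2 * norm r)"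
proof -
  have "0 \<le> (Phi2 r f - \<bar>r \<bullet> f\<bar>) / norm r"
    using abs_inner_le_Phi2[of r f] by simp
  then show ?thesis
    by (simp add: ay_def power_mult_distrib power_divide)
qed

lemma bx_squared: "(bx r f)\<^sup>2 = (\<bar>r \<bullet> f\<bar> + Phi2 r f) / (4 * norm r)"
proof -
  have "0 \<le> (\<bar>r \<bullet> f\<bar> + Phi2 r f) / norm r"
    using abs_inner_le_Phi2[of r f] by simp
  then show ?thesis
    by (simp add: bx_def power_mult_distrib power_divide)
qed

lemma by'_squared:
  "(by' r f)\<^sup>2 = (if r \<bullet> f = 0 then 0 else (Phi1 r f - \<bar>r \<bullet> f\<bar>) / (2 * norm r))"
proof -
  have "0 \<le> (Phi1 r f - \<bar>r \<bullet> f\<bar>) / norm r"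
    using abs_inner_le_Phi1[of r f] by simp
  then show ?thesis
    by (simp add: by'_def power_mult_distrib power_divide sgn_real_def)
qed

lemma norm_c1_squared:
  assumes "r \<noteq> 0"
  shows "(norm (c1 r f))\<^sup>2
    = (if r \<bullet> f = 0 then Phi1 r f else (3 * Phi1 r f - \<bar>r \<bullet> f\<bar>) / 4) / norm r"
proof -
  have "r \<times> f = 0 \<Longrightarrow> ay r f = 0"
    by (simp add: ay_def Phi2_eq Phi1_eq_abs_inner)
  then have "(norm (c1 r f))\<^sup>2 = (ax r f)\<^sup>2 + (ay r f)\<^sup>2"
    unfolding c1_def avec_def by (rule norm_transpose_Rmat_mult[OF assms])
  also have "\<dots>
      = (if r \<bullet> f = 0 then Phi1 r f else (3 * Phi1 r f - \<bar>r \<bullet> f\<bar>) / 4) / norm r"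
    using assms by (simp add: ax_squared ay_squared Phi2_eq field_simps)
  finally show ?thesis .
qed

lemma norm_c2_squared:
  assumes "r \<noteq> 0"
  shows "(norm (c2 r f))\<^sup>2
    = (if r \<bullet> f = 0 then Phi1 r f / 2 else (3 * Phi1 r f - \<bar>r \<bullet> f\<bar>) / 4) / norm r"
proof -
  have "r \<times> f = 0 \<Longrightarrow> by' r f = 0"
    by (simp add: by'_def Phi1_eq_abs_inner)
  then have "(norm (c2 r f))\<^sup>2 = (bx r f)\<^sup>2 + (by' r f)\<^sup>2"
    unfolding c2_def bvec_def by (rule norm_transpose_Rmat_mult[OF assms])
  also have "\<dots>
      = (if r \<bullet> f = 0 then Phi1 r f / 2 else (3 * Phi1 r f - \<bar>r \<bullet> f\<bar>) / 4) / norm r"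
    using assms by (simp add: bx_squared by'_squared Phi2_eq field_simps)
  finally show ?thesis .
qed

lemma psi_lower_bound:
  assumes "eps2 > 0"
  shows "psi eps1 eps2 r \<zeta> > (norm r)^3 * (Phi1 r \<zeta> - \<bar>r \<bullet> \<zeta>\<bar> / 4)"
proof -
  define y where "y = (norm r)^3 * (r \<bullet> \<zeta>)"
  have "\<bar>tanh (y / eps1)\<bar> \<le> 1"
    using tanh_real_bounds[of "y / eps1"] by auto
  then have "\<bar>y * tanh (y / eps1)\<bar> \<le> \<bar>y\<bar>"
    by (simp add: abs_mult mult_left_le)
  then have tanh_term: "- (y / 4) * tanh (y / eps1) \<ge> - \<bar>y\<bar> / 4"
    by simp
  have "(norm r)^3 * Phi1 r \<zeta> = sqrt (((norm r)^3 * Phi1 r \<zeta>)\<^sup>2)"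
    by (simp add: Phi1_nonneg)
  also have "\<dots> = sqrt ((norm r)^6 * (Phi1 r \<zeta>)\<^sup>2)"
    by (simp add: power_mult_distrib flip: power_mult)
  also have "\<dots> < sqrt ((norm r)^6 * (Phi1 r \<zeta>)\<^sup>2 + eps2)"
    using assms by simp
  finally show ?thesis
    using tanh_term by (simp add: psi_def y_def abs_mult algebra_simps)
qed

theorem proposition4:
  fixes eps1 eps2 :: real and r f :: "real^3"
  assumes "eps1 > 0" and "eps2 > 0" and "r \<noteq> 0"
  shows "psi eps1 eps2 r ((1 / (norm r)^4) *\<^sub>R f) > (norm (c1 r f))^2
         \<and> (norm (c1 r f))^2 = (2 - (sgn (r \<bullet> f))^2) * (norm (c2 r f))^2"
proof
  have "(norm (c1 r f))\<^sup>2 \<le> (Phi1 r f - \<bar>r \<bullet> f\<bar> / 4) / norm r"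
    using assms(3) Phi1_nonneg[of r f] by (simp add: norm_c1_squared field_simps)
  also have "\<dots> = (norm r)^3 * (Phi1 r ((1 / (norm r)^4) *\<^sub>R f)
      - \<bar>r \<bullet> (1 / (norm r)^4) *\<^sub>R f\<bar> / 4)"
    using assms(3) by (simp add: Phi1_scaleR_right field_simps eval_nat_numeral)
  also have "\<dots> < psi eps1 eps2 r ((1 / (norm r)^4) *\<^sub>R f)"
    using assms(2) by (rule psi_lower_bound)
  finally show "psi eps1 eps2 r ((1 / (norm r)^4) *\<^sub>R f) > (norm (c1 r f))^2" .
  show "(norm (c1 r f))^2 = (2 - (sgn (r \<bullet> f))^2) * (norm (c2 r f))^2"
    using assms(3) by (simp add: norm_c1_squared norm_c2_squared sgn_real_def)
qed

end
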